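(* Assume the setting and Assumptions L1, L2 of the context, and define $\delta_1=\min\{\delta_0,(1-e^{-\bar\kappa\sigma})/(2K_1)\}$. Let $U=U^*+F_0$ with $\|F_0\|_{\rm s}<\|F_0\|_{\rm u}\le\delta_1$, and set $F_n=\mathcal R_{n\sigma}(U)-U^*$. Then for every $n\ge0$ such that $\|F_k\|_{\rm u}\le\delta_1$ for all $0\le k\le n$, we have $$\|F_n\|_{\rm s}<\|F_n\|_{\rm u}\quad\text{and}\quad e^{\bar\kappa\sigma/2}\|F_n\|_{\rm u}<\|F_{n+1}\|_{\rm u}<2K_2\|F_n\|_{\rm u}.$$
   Context: $\Gamma$ is a real Banach space, $\sigma>0$, $\mathcal R_\sigma:\Gamma\to\Gamma$ a map with fixed point $U^*$, $\mathcal R_{n\sigma}=(\mathcal R_\sigma)^n$, $\mathcal T_{\sigma,U}$ the Fréchet derivative of $\mathcal R_\sigma$ at $U$. Assumption L1: $\Gamma=E^{\rm u}\oplus E^{\rm s}$, invariant under $\mathcal T_{\sigma,U^*}$, $\dim E^{\rm u}=N$, and for some $\bar\kappa>0$: $\|\mathcal T_{\sigma,U^*}F\|\ge e^{\bar\kappa\sigma}\|F\|$ for $F\in E^{\rm u}$, $\le e^{-\bar\kappa\sigma}\|F\|$ for $F\in E^{\rm s}$. For $F=F^{\rm u}+F^{\rm s}$ ($F^{\rm u}\in E^{\rm u}$, $F^{\rm s}\in E^{\rm s}$), $\|F\|_{\rm s}=\|F^{\rm s}\|$, $\|F\|_{\rm u}=\|F^{\rm u}\|$, and $\|\cdot\|$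 denotes the box norm $\|F\|=\max\{\|F\|_{\rm s},\|F\|_{\rm u}\}$. Assumption L2: there are $\delta_0,K_1,K_2>0$ with $\delta_0K_1\le K_2$ such that for $\|U-U^*\|,\|F\|\le\delta_0$: $\|\mathcal R_\sigma(U+F)-\mathcal R_\sigma(U)-\mathcal T_{\sigma,U}F\|\le K_1\|F\|^2$ and $\|\mathcal T_{\sigma,U}F\|\le K_2\|F\|$. *)

theory Defs
  imports "HOL-Analysis.Analysis"
begin

definition ucomp :: "'a::real_vector set \<Rightarrow> 'a set \<Rightarrow> 'a \<Rightarrow> 'a" where
  "ucomp Eu Es F = (THE x. x \<in> Eu \<and> F - x \<in> Es)"

definition scomp :: "'a::real_vector set \<Rightarrow> 'a set \<Rightarrow> 'a \<Rightarrow> 'a" where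
  "scomp Eu Es F = F - ucomp Eu Es F"

definition direct_sum_decomp :: "'a::real_vector set \<Rightarrow> 'a set \<Rightarrow> bool" where
  "direct_sum_decomp Eu Es \<longleftrightarrow> subspace Eu \<and> subspace Es \<and> Eu \<inter> Es = {0}
     \<and> (\<forall>F. \<exists>u\<in>Eu. \<exists>s\<in>Es. F = u + s)"

end

theory Submission
  imports Defs
begin

text \<open>Put \<open>a = exp (\<kappa> \<sigma> / 2)\<close>, so the linearisation \<open>L\<close> of \<open>R\<close> at \<open>U\<^sup>*\<close> stretches \<open>E\<^sup>u\<close>
and shrinks \<open>E\<^sup>s\<close> by the factor \<open>a\<^sup>2\<close>. In the cone \<open>\<parallel>F\<parallel>\<^sub>s < \<parallel>F\<parallel>\<^sub>u = u\<close> the box norm of \<open>F\<close>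
is \<open>u\<close>, so the remainder of one step has norm at most \<open>K\<^sub>1 u\<^sup>2\<close>, which the choice of \<open>\<delta>\<^sub>1\<close>
bounds by \<open>c u\<close> with \<open>c = (1 - 1/a\<^sup>2) / 2\<close>. Hence the new unstable part has norm at least
\<open>(a\<^sup>2 - c) u\<close>, which exceeds \<open>a u\<close> (as \<open>2 a\<^sup>3 > a + 1\<close>) and the norm \<open>(1/a\<^sup>2 + c) u\<close> bounding
the new stable part; and it is at most \<open>(K\<^sub>2 + c) u < 2 K\<^sub>2 u\<close>, since \<open>L\<close> stretching \<open>E\<^sup>u\<close> forces
\<open>K\<^sub>2 \<ge> a\<^sup>2\<close>.\<close>

lemma direct_sum_decomp_subspaces:
  assumes "direct_sum_decomp Eu Es"
  shows "subspace Eu" "subspace Es"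
  using assms by (simp_all add: direct_sum_decomp_def)

lemma ucomp_sum:
  assumes decomp: "direct_sum_decomp Eu Es" and "u \<in> Eu" "s \<in> Es"
  shows "ucomp Eu Es (u + s) = u"
  unfolding ucomp_def
proof (rule the_equality)
  show "u \<in> Eu \<and> u + s - u \<in> Es" using assms by simp
next
  fix x assume x: "x \<in> Eu \<and> u + s - x \<in> Es"
  have "u - x \<in> Eu" using x \<open>u \<in> Eu\<close> decomp
    by (simp add: direct_sum_decomp_subspaces subspace_diff)
  moreover have "u - x \<in> Es"
    using subspace_diff[of Es "u + s - x" s] x \<open>s \<in> Es\<close> decomp
    by (simp add: direct_sum_decomp_subspaces)
  ultimately have "u - x \<in> Eu \<inter> Es" by blast
  then have "u - x = 0" using decomp unfolding direct_sum_decomp_def by blast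
  then show "x = u" by simp
qed

lemma scomp_sum:
  assumes "direct_sum_decomp Eu Es" "u \<in> Eu" "s \<in> Es"
  shows "scomp Eu Es (u + s) = s"
  using ucomp_sum[OF assms] by (simp add: scomp_def)

lemma
  assumes "direct_sum_decomp Eu Es"
  shows ucomp_mem: "ucomp Eu Es F \<in> Eu" and scomp_mem: "scomp Eu Es F \<in> Es"
proof -
  obtain u s where "u \<in> Eu" "s \<in> Es" "F = u + s"
    using assms unfolding direct_sum_decomp_def by blast
  then show "ucomp Eu Es F \<in> Eu" "scomp Eu Es F \<in> Es"
    using ucomp_sum[OF assms] scomp_sum[OF assms] by simp_all
qed

lemma ucomp_add_scomp: "ucomp Eu Es F + scomp Eu Es F = F"
  by (simp add: scomp_def)

lemma
  assumes decomp: "direct_sum_decomp Eu Es"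
  shows ucomp_add: "ucomp Eu Es (F + G) = ucomp Eu Es F + ucomp Eu Es G"
    and scomp_add: "scomp Eu Es (F + G) = scomp Eu Es F + scomp Eu Es G"
proof -
  have "F + G = (ucomp Eu Es F + ucomp Eu Es G) + (scomp Eu Es F + scomp Eu Es G)"
    by (metis ucomp_add_scomp add.assoc add.commute)
  moreover have "ucomp Eu Es F + ucomp Eu Es G \<in> Eu" "scomp Eu Es F + scomp Eu Es G \<in> Es"
    using decomp by (simp_all add: ucomp_mem scomp_mem subspace_add direct_sum_decomp_subspaces)
  ultimately show "ucomp Eu Es (F + G) = ucomp Eu Es F + ucomp Eu Es G"
    "scomp Eu Es (F + G) = scomp Eu Es F + scomp Eu Es G"
    using ucomp_sum[OF decomp] scomp_sum[OF decomp] by simp_all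
qed

lemma
  assumes decomp: "direct_sum_decomp Eu Es" and "linear L"
    and "L ` Eu \<subseteq> Eu" "L ` Es \<subseteq> Es"
  shows ucomp_linear_image: "ucomp Eu Es (L F) = L (ucomp Eu Es F)"
    and scomp_linear_image: "scomp Eu Es (L F) = L (scomp Eu Es F)"
proof -
  have "L F = L (ucomp Eu Es F) + L (scomp Eu Es F)"
    using \<open>linear L\<close> by (metis ucomp_add_scomp linear_add)
  moreover have "L (ucomp Eu Es F) \<in> Eu" "L (scomp Eu Es F) \<in> Es"
    using assms ucomp_mem scomp_mem by blast+
  ultimately show "ucomp Eu Es (L F) = L (ucomp Eu Es F)" "scomp Eu Es (L F) = L (scomp Eu Es F)"
    using ucomp_sum[OF decomp] scomp_sum[OF decomp] by simp_all
qed

lemma cone_step_arith: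
  fixes a u s \<rho> K gu gs :: real
  assumes "a > 1" "0 \<le> s" "s < u" "\<rho> \<le> u * ((1 - 1 / a\<^sup>2) / 2)" "a\<^sup>2 * u \<le> K * u"
    and gu_lower: "a\<^sup>2 * u - \<rho> \<le> gu" and gu_upper: "gu \<le> K * u + \<rho>"
    and gs_upper: "gs \<le> s / a\<^sup>2 + \<rho>"
  shows "gs < gu" "a * u < gu" "gu < 2 * K * u"
proof -
  define c where "c = (1 - 1 / a\<^sup>2) / 2"
  have u: "u > 0" using assms by linarith
  have a2: "a\<^sup>2 > 1" using \<open>a > 1\<close> by (simp add: one_less_power)
  have "0 < 1 / a\<^sup>2" using \<open>a > 1\<close> by simp
  moreover have "2 * c = 1 - 1 / a\<^sup>2" by (simp add: c_def)
  ultimately have "c < 1" by linarith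
  have \<rho>: "\<rho> \<le> u * c" using assms(4) unfolding c_def .
  have "s / a\<^sup>2 < u / a\<^sup>2" using \<open>s < u\<close> a2 by (intro divide_strict_right_mono) auto
  moreover have "u / a\<^sup>2 + 2 * (u * c) = u" by (simp add: c_def field_simps)
  moreover have "u \<le> a\<^sup>2 * u" using a2 u by simp
  ultimately show "gs < gu" using gu_lower gs_upper \<rho> by linarith
  have "a < a\<^sup>2 - c"
  proof -
    have "(a\<^sup>2 - c - a) * (2 * a\<^sup>2) = (a - 1)\<^sup>2 * (2 * a\<^sup>2 + 2 * a + 1)"
      using \<open>a > 1\<close> by (simp add: c_def field_simps power2_eq_square)
    also have "\<dots> > 0" using \<open>a > 1\<close> by (simp add: add_pos_pos)
    finally have "0 < (a\<^sup>2 - c - a) * (2 * a\<^sup>2)" .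
    then show ?thesis using \<open>a > 1\<close> by (simp add: zero_less_mult_iff)
  qed
  then have "a * u < (a\<^sup>2 - c) * u" using u by (rule mult_strict_right_mono)
  then have "a * u < a\<^sup>2 * u - u * c" by (simp add: algebra_simps)
  then show "a * u < gu" using gu_lower \<rho> by linarith
  have "c < K" using \<open>c < 1\<close> a2 \<open>a\<^sup>2 * u \<le> K * u\<close> u by simp
  then have "u * c < K * u" using u by simp
  then show "gu < 2 * K * u" using gu_upper \<rho> by linarith
qed

locale hyperbolic_fixed_point =
  fixes R L :: "'a::real_normed_vector \<Rightarrow> 'a" and Ustar :: 'a and Eu Es :: "'a set"
    and a \<delta>0 K1 K2 :: real
  assumes fixpt: "R Ustar = Ustar"
    and linear: "linear L"
    and decomp: "direct_sum_decomp Eu Es"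
    and invariant_u: "L ` Eu \<subseteq> Eu" and invariant_s: "L ` Es \<subseteq> Es"
    and a_gt_1: "a > 1"
    and expand: "\<And>x. x \<in> Eu \<Longrightarrow> a\<^sup>2 * norm x \<le> norm (L x)"
    and contract: "\<And>y. y \<in> Es \<Longrightarrow> norm (L y) \<le> norm y / a\<^sup>2"
    and box_norm: "\<And>F. norm F = max (norm (scomp Eu Es F)) (norm (ucomp Eu Es F))"
    and K1_pos: "K1 > 0"
    and remainder: "\<And>F. norm F \<le> \<delta>0 \<Longrightarrow> norm (R (Ustar + F) - R Ustar - L F) \<le> K1 * (norm F)\<^sup>2"
    and bounded: "\<And>F. norm F \<le> \<delta>0 \<Longrightarrow> norm (L F) \<le> K2 * norm F"
begin

abbreviation unorm :: "'a \<Rightarrow> real" where "unorm F \<equiv> norm (ucomp Eu Es F)"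

abbreviation snorm :: "'a \<Rightarrow> real" where "snorm F \<equiv> norm (scomp Eu Es F)"

definition cone_radius :: real where
  "cone_radius = min \<delta>0 ((1 - 1 / a\<^sup>2) / (2 * K1))"

definition orbit :: "'a \<Rightarrow> nat \<Rightarrow> 'a" where
  "orbit F0 n = (R ^^ n) (Ustar + F0) - Ustar"

lemma orbit_Suc: "orbit F0 (Suc n) = R (Ustar + orbit F0 n) - Ustar"
  by (simp add: orbit_def)

lemma cone_step:
  assumes cone: "snorm F < unorm F" and small: "unorm F \<le> cone_radius"
  defines "G \<equiv> R (Ustar + F) - Ustar"
  shows "snorm G < unorm G \<and> a * unorm F < unorm G \<and> unorm G < 2 * K2 * unorm F"
proof -
  define x y r where "x = ucomp Eu Es F" and "y = scomp Eu Es F" and "r = G - L F"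
  have x: "x \<in> Eu" "norm x = unorm F" and y: "y \<in> Es" "norm y = snorm F"
    using decomp by (simp_all add: x_def y_def ucomp_mem scomp_mem)
  have norm_F: "norm F = unorm F" using box_norm[of F] cone by simp
  have u_le: "unorm F \<le> \<delta>0" "K1 * unorm F \<le> (1 - 1 / a\<^sup>2) / 2"
    using small K1_pos by (auto simp: cone_radius_def field_simps)
  have "norm r \<le> K1 * (norm F)\<^sup>2"
    using remainder[of F] norm_F u_le fixpt by (simp add: r_def G_def)
  also have "\<dots> = unorm F * (K1 * unorm F)" by (simp add: norm_F power2_eq_square)
  also have "\<dots> \<le> unorm F * ((1 - 1 / a\<^sup>2) / 2)" using u_le(2) by (intro mult_left_mono) simp_all
  finally have r: "norm r \<le> unorm F * ((1 - 1 / a\<^sup>2) / 2)" .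
  have "G = L F + r" by (simp add: r_def)
  then have G: "ucomp Eu Es G = L x + ucomp Eu Es r" "scomp Eu Es G = L y + scomp Eu Es r"
    using decomp linear invariant_u invariant_s
    by (simp_all add: x_def y_def ucomp_add scomp_add ucomp_linear_image scomp_linear_image)
  have r_comps: "unorm r \<le> norm r" "snorm r \<le> norm r" using box_norm[of r] by simp_all
  have Lx: "a\<^sup>2 * unorm F \<le> norm (L x)" "norm (L x) \<le> K2 * unorm F"
    using expand[OF x(1)] bounded[of x] x u_le by simp_all
  have "a\<^sup>2 * unorm F \<le> K2 * unorm F" using Lx by linarith
  moreover have "a\<^sup>2 * unorm F - norm r \<le> unorm G"
    using G norm_diff_ineq[of "L x" "ucomp Eu Es r"] Lx r_comps by simp
  moreover have "unorm G \<le> K2 * unorm F + norm r"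
    using G norm_triangle_ineq[of "L x" "ucomp Eu Es r"] Lx r_comps by simp
  moreover have "snorm G \<le> snorm F / a\<^sup>2 + norm r"
    using G norm_triangle_ineq[of "L y" "scomp Eu Es r"] contract[OF y(1)] y r_comps by simp
  ultimately show ?thesis using cone_step_arith[OF a_gt_1 norm_ge_zero cone r] by blast
qed

lemma orbit_in_cone:
  assumes "snorm F0 < unorm F0" "\<forall>k\<le>n. unorm (orbit F0 k) \<le> cone_radius"
  shows "snorm (orbit F0 n) < unorm (orbit F0 n)"
  using assms(2)
proof (induction n)
  case 0
  then show ?case using assms(1) by (simp add: orbit_def)
next
  case (Suc n)
  then show ?case using cone_step[of "orbit F0 n"] by (simp add: orbit_Suc)
qed

lemma orbit_expands_in_cone:
  assumes "snorm F0 < unorm F0" "\<forall>k\<le>n. unorm (orbit F0 k) \<le> cone_radius"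
  shows "snorm (orbit F0 n) < unorm (orbit F0 n)
    \<and> a * unorm (orbit F0 n) < unorm (orbit F0 (Suc n))
    \<and> unorm (orbit F0 (Suc n)) < 2 * K2 * unorm (orbit F0 n)"
  using orbit_in_cone[OF assms] cone_step[of "orbit F0 n"] assms(2) by (simp add: orbit_Suc)

end

theorem lemma1:
  fixes R :: "'a::banach \<Rightarrow> 'a" and T :: "'a \<Rightarrow> 'a \<Rightarrow> 'a"
    and Ustar F0 :: 'a and Eu Es :: "'a set" and N :: nat
    and \<sigma> \<kappa> \<delta>0 K1 K2 :: real
  assumes sigma_pos: "\<sigma> > 0"
    and fixpt: "R Ustar = Ustar"
    and deriv: "\<And>U. (R has_derivative T U) (at U)"
    and decomp: "direct_sum_decomp Eu Es"
    and inv_u: "T Ustar ` Eu \<subseteq> Eu" and inv_s: "T Ustar ` Es \<subseteq> Es"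
    and fin_dim: "\<exists>B. finite B \<and> span B = Eu" and dimN: "dim Eu = N"
    and kappa_pos: "\<kappa> > 0"
    and expand: "\<And>F. F \<in> Eu \<Longrightarrow> norm (T Ustar F) \<ge> exp (\<kappa> * \<sigma>) * norm F"
    and contract: "\<And>F. F \<in> Es \<Longrightarrow> norm (T Ustar F) \<le> exp (- \<kappa> * \<sigma>) * norm F"
    and box_norm: "\<And>F. norm F = max (norm (scomp Eu Es F)) (norm (ucomp Eu Es F))"
    and L2_pos: "\<delta>0 > 0" "K1 > 0" "K2 > 0" "\<delta>0 * K1 \<le> K2"
    and L2_rem: "\<And>U F. norm (U - Ustar) \<le> \<delta>0 \<Longrightarrow> norm F \<le> \<delta>0 \<Longrightarrow>
                  norm (R (U + F) - R U - T U F) \<le> K1 * (norm F)\<^sup>2"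
    and L2_bnd: "\<And>U F. norm (U - Ustar) \<le> \<delta>0 \<Longrightarrow> norm F \<le> \<delta>0 \<Longrightarrow>
                  norm (T U F) \<le> K2 * norm F"
    and F0: "norm (scomp Eu Es F0) < norm (ucomp Eu Es F0)"
            "norm (ucomp Eu Es F0) \<le> min \<delta>0 ((1 - exp (- \<kappa> * \<sigma>)) / (2 * K1))"
  shows "\<forall>n. (\<forall>k\<le>n. norm (ucomp Eu Es ((R ^^ k) (Ustar + F0) - Ustar))
                       \<le> min \<delta>0 ((1 - exp (- \<kappa> * \<sigma>)) / (2 * K1))) \<longrightarrow>
           (let Fn = (R ^^ n) (Ustar + F0) - Ustar;
                Fn1 = (R ^^ Suc n) (Ustar + F0) - Ustar
            in norm (scomp Eu Es Fn) < norm (ucomp Eu Es Fn)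
               \<and> exp (\<kappa> * \<sigma> / 2) * norm (ucomp Eu Es Fn) < norm (ucomp Eu Es Fn1)
               \<and> norm (ucomp Eu Es Fn1) < 2 * K2 * norm (ucomp Eu Es Fn))"
proof -
  define a where "a = exp (\<kappa> * \<sigma> / 2)"
  have a_sq: "exp (\<kappa> * \<sigma>) = a\<^sup>2" "exp (- \<kappa> * \<sigma>) = 1 / a\<^sup>2"
    by (simp_all add: a_def power2_eq_square exp_minus field_simps flip: exp_add)
  interpret hyperbolic_fixed_point R "T Ustar" Ustar Eu Es a \<delta>0 K1 K2
  proof (rule hyperbolic_fixed_point.intro)
    show "linear (T Ustar)" using deriv has_derivative_linear by blast
    show "a > 1" using kappa_pos sigma_pos by (simp add: a_def)
    show "a\<^sup>2 * norm x \<le> norm (T Ustar x)" if "x \<in> Eu" for x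
      using expand[OF that] by (simp add: a_sq)
    show "norm (T Ustar y) \<le> norm y / a\<^sup>2" if "y \<in> Es" for y
      using contract[OF that] unfolding a_sq by simp
    show "norm (R (Ustar + F) - R Ustar - T Ustar F) \<le> K1 * (norm F)\<^sup>2"
      and "norm (T Ustar F) \<le> K2 * norm F" if "norm F \<le> \<delta>0" for F
      using L2_rem[of Ustar F] L2_bnd[of Ustar F] that L2_pos by simp_all
  qed (fact fixpt decomp inv_u inv_s box_norm L2_pos)+
  have "cone_radius = min \<delta>0 ((1 - exp (- \<kappa> * \<sigma>)) / (2 * K1))"
    unfolding cone_radius_def a_sq ..
  then show ?thesis using orbit_expands_in_cone[OF F0(1)]
    by (simp add: orbit_def a_def)
qed

end
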